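(* For every integer $k\ge 1$ we have $I_k\subseteq W_k$.
   Context: Let $K$ be a field and $A$ the free associative (non-unital) $K$-algebra on countably many free generators $x_0,x_1,x_2,\dots$; the monomials $x_{i_1}\cdots x_{i_n}$ ($n\ge1$, $i_j\ge 0$) form a $K$-basis of $A$. Let $A^1$ be $A$ with a unity adjoined. For $n\ge1$ let $A(n)$ be the $K$-span of monomials of length $n$, and let $A(0)=K$ (scalars in $A^1$). Let $D$ be the unique derivation of $A$ with $D(x_i)=x_{i+1}$ for all $i$. For $k\ge1$ let $\mathcal X_k=\{x_0,\dots,x_{k-1}\}$. For $n\ge1$ let $W(k,n,0)$ be the set of monomials $x_{i_1}\cdots x_{i_n}$ of length $n$ with all $x_{i_j}\in\mathcal X_k$, let $W(k,n,l+1)=\{D(w): w\in W(k,n,l)\}$, and $W(k,n)=\bigcup_{t\ge0}W(k,n,t)$. Let $I_k$ be the two-sided ideal of $A$ generated by $W(k,2\cdot 100^{k^2})$, and let $W_k=\sum_{m\ge0}A(m\cdot 100^{k^2})\,W(k,100^{k^2})\,A^1$ (the $K$-linear span of products $u w v$ with $u\in A(m\cdot100^{k^2})$ for some $m\ge0$, $w\in W(k,100^{k^2})$, $v\in A^1$). *)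

theory Defs
  imports Main
begin

text \<open>Elements of the unital free algebra A^1 over the field 'k on generators x_0, x_1, ...
  are finitely supported coefficient functions on words (nat list); the word [i1,...,in]
  stands for the monomial x_i1 ... x_in, and [] stands for the unity.\<close>

type_synonym 'k fa = "nat list \<Rightarrow> 'k"

definition fin_supp :: "'k::zero fa \<Rightarrow> bool" where
  "fin_supp f \<longleftrightarrow> finite {w. f w \<noteq> 0}"

definition A1 :: "'k::field fa set" where
  "A1 = {f. fin_supp f}"

definition A :: "'k::field fa set" where
  "A = {f. fin_supp f \<and> f [] = 0}"

definition mono :: "nat list \<Rightarrow> 'k::field fa" where
  "mono w = (\<lambda>v. if v = w then 1 else 0)"

definition fzero :: "'k::field fa" where "fzero = (\<lambda>_. 0)"
definition fadd :: "'k::field fa \<Rightarrow> 'k fa \<Rightarrow> 'k fa" where "fadd f g = (\<lambda>w. f w + g w)"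
definition fscale :: "'k::field \<Rightarrow> 'k fa \<Rightarrow> 'k fa" where "fscale c f = (\<lambda>w. c * f w)"

text \<open>Multiplication: concatenation of monomials, extended bilinearly.\<close>
definition fmult :: "'k::field fa \<Rightarrow> 'k fa \<Rightarrow> 'k fa" where
  "fmult f g = (\<lambda>w. \<Sum>i\<le>length w. f (take i w) * g (drop i w))"

inductive_set kspan :: "'k::field fa set \<Rightarrow> 'k fa set" for S where
  span_zero: "fzero \<in> kspan S"
| span_gen: "s \<in> S \<Longrightarrow> s \<in> kspan S"
| span_add: "f \<in> kspan S \<Longrightarrow> g \<in> kspan S \<Longrightarrow> fadd f g \<in> kspan S"
| span_scale: "f \<in> kspan S \<Longrightarrow> fscale c f \<in> kspan S"

text \<open>The derivation D with D(x_i) = x_(i+1): on a monomial,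
  D(x_i1...x_in) = sum_j x_i1 ... x_(ij+1) ... x_in; the coefficient formula below is
  its K-linear extension.\<close>
definition Dder :: "'k::field fa \<Rightarrow> 'k fa" where
  "Dder f = (\<lambda>v. \<Sum>j<length v. if 0 < v ! j then f (v[j := v ! j - 1]) else 0)"

definition Adeg :: "nat \<Rightarrow> 'k::field fa set" where
  "Adeg n = kspan {mono w | w. length w = n}"

definition W0 :: "nat \<Rightarrow> nat \<Rightarrow> 'k::field fa set" where
  "W0 k n = {mono w | w. length w = n \<and> (\<forall>i\<in>set w. i < k)}"

definition Wl :: "nat \<Rightarrow> nat \<Rightarrow> nat \<Rightarrow> 'k::field fa set" where
  "Wl k n l = (Dder ^^ l) ` W0 k n"

definition Wset :: "nat \<Rightarrow> nat \<Rightarrow> 'k::field fa set" where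
  "Wset k n = (\<Union>t. Wl k n t)"

definition is_ideal :: "'k::field fa set \<Rightarrow> bool" where
  "is_ideal J \<longleftrightarrow> J \<subseteq> A \<and> fzero \<in> J \<and>
     (\<forall>f\<in>J. \<forall>g\<in>J. fadd f g \<in> J) \<and> (\<forall>c. \<forall>f\<in>J. fscale c f \<in> J) \<and>
     (\<forall>a\<in>A. \<forall>f\<in>J. fmult a f \<in> J \<and> fmult f a \<in> J)"

definition ideal_gen :: "'k::field fa set \<Rightarrow> 'k fa set" where
  "ideal_gen S = \<Inter>{J. is_ideal J \<and> S \<subseteq> J}"

definition Ik :: "nat \<Rightarrow> 'k::field fa set" where
  "Ik k = ideal_gen (Wset k (2 * 100 ^ (k\<^sup>2)))"

definition Wk :: "nat \<Rightarrow> 'k::field fa set" where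
  "Wk k = kspan {fmult (fmult u w) v | u w v m.
      u \<in> Adeg (m * 100 ^ (k\<^sup>2)) \<and> w \<in> Wset k (100 ^ (k\<^sup>2)) \<and> v \<in> A1}"

end

theory Submission imports Defs "HOL-Library.Function_Algebras" begin

(* Write N = 100^(k^2) and G = W(k,2N).  Since every element of G has zero
   constant term, the K-span A1 * G * A1 of all products a g b (a, b in A1, g in G) is a
   two-sided ideal of A containing G, hence contains I_k.  It remains to put each a g b
   into W_k; by linearity we may take a = x_u a monomial.  Write g = D^l(x_w) with
   |w| = 2N and cut w = p q r so that |q| = N and |u| + |p| is a multiple of N.  Then
   x_w = x_p x_q x_r lies in the span A(|p|) * W(k,N) * A1, and this span is stable
   under D because D is a derivation and each of A(|p|), W(k,N), A1 is D-stable.  So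
   D^l(x_w) stays there, and multiplying by x_u on the left lands in
   A(mN) * W(k,N) * A1, a subset of W_k. *)

section \<open>The free algebra as an algebra of coefficient functions\<close>

text \<open>The vector-space operations of the definitions are the pointwise ones, so the
  function-algebra instances of HOL-Library apply.\<close>
lemma fadd_eq: "fadd f g = f + g"
  by (auto simp: fadd_def)

lemma fzero_eq: "fzero = 0"
  by (auto simp: fzero_def)

lemma fscale_zero_left: "fscale 0 f = 0"
  by (auto simp: fscale_def)

text \<open>Associativity: both sides sum over the ways to cut w into three consecutive pieces.\<close>
lemma fmult_assoc: "fmult (fmult f g) h = fmult f (fmult g h)"
proof
  fix w :: "nat list"
  let ?n = "length w"
  define G where "G j t = f (take j w) * g (take t (drop j w)) * h (drop (j+t) w)" for j t
  have "fmult (fmult f g) h w = (\<Sum>i\<le>?n. \<Sum>j\<le>i. G j (i - j))"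
    unfolding fmult_def G_def
    by (auto simp: sum_distrib_right min_def drop_take intro!: sum.cong)
  also have "\<dots> = (\<Sum>(j,t)\<in>{(j,t). j+t \<le> ?n}. G j t)"
    by (rule sum.triangle_reindex_eq[symmetric])
  also have "{(j,t). j+t \<le> ?n} = Sigma {..?n} (\<lambda>j. {..?n-j})" by auto
  also have "(\<Sum>(j,t)\<in>Sigma {..?n} (\<lambda>j. {..?n-j}). G j t) = (\<Sum>j\<le>?n. \<Sum>t\<le>?n-j. G j t)"
    by (rule sum.Sigma[symmetric]) auto
  also have "\<dots> = fmult f (fmult g h) w"
    unfolding fmult_def G_def
    by (auto simp: sum_distrib_left mult.assoc add.commute intro!: sum.cong)
  finally show "fmult (fmult f g) h w = fmult f (fmult g h) w" .
qed

lemma fmult_add_left: "fmult (f + g) h = fmult f h + fmult g h"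
  by (auto simp: fmult_def distrib_right sum.distrib)

lemma fmult_add_right: "fmult h (f + g) = fmult h f + fmult h g"
  by (auto simp: fmult_def distrib_left sum.distrib)

lemma fmult_scale_left: "fmult (fscale c f) h = fscale c (fmult f h)"
  by (auto simp: fmult_def fscale_def sum_distrib_left mult.assoc)

lemma fmult_scale_right: "fmult h (fscale c f) = fscale c (fmult h f)"
  by (auto simp: fmult_def fscale_def sum_distrib_left mult.assoc mult.left_commute)

lemma fmult_Nil: "fmult f g [] = f [] * g []"
  by (simp add: fmult_def)

lemma fmult_mono_left:
  "fmult (mono u) f w =
     (if length u \<le> length w \<and> take (length u) w = u then f (drop (length u) w) else 0)"
proof -
  have "fmult (mono u) f w = (\<Sum>i\<le>length w. if i = length u then
      (if length u \<le> length w \<and> take (length u) w = u then f (drop (length u) w) else 0) else 0)"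
    unfolding fmult_def
    by (intro sum.cong refl) (auto simp: mono_def min_def split: if_splits)
  then show ?thesis by simp
qed

lemma mono_mult: "fmult (mono u) (mono v) = mono (u @ v)"
proof
  fix w :: "nat list"
  show "fmult (mono u) (mono v) w = mono (u @ v) w"
    unfolding fmult_mono_left by (auto simp: mono_def, metis append_take_drop_id)
qed

lemma mono_Nil_left: "fmult (mono []) f = f"
  by (auto simp: fmult_def mono_def sum.atMost_shift)

lemma mono_Nil_right: "fmult f (mono []) = f"
proof
  fix w :: "nat list"
  have "fmult f (mono []) w = (\<Sum>i\<le>length w. if i = length w then f (take i w) else 0)"
    unfolding fmult_def mono_def by (intro sum.cong) auto
  then show "fmult f (mono []) w = f w" by simp
qed

lemma fmult_nonzero:
  assumes "fmult f g w \<noteq> 0"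
  shows "\<exists>i\<le>length w. f (take i w) \<noteq> 0 \<and> g (drop i w) \<noteq> 0"
proof (rule ccontr)
  assume "\<not> ?thesis"
  then have "fmult f g w = 0" unfolding fmult_def by (intro sum.neutral) auto
  with assms show False by simp
qed

lemma Dder_add: "Dder (f + g) = Dder f + Dder g"
  by (auto simp: Dder_def sum.distrib[symmetric] intro!: sum.cong ext)

lemma Dder_scale: "Dder (fscale c f) = fscale c (Dder f)"
  by (auto simp: Dder_def fscale_def sum_distrib_left intro!: sum.cong ext)

text \<open>The Leibniz rule: the coefficient formula for D really defines a derivation.
  Split the position j of the raised letter according to the cut position i.\<close>
lemma Dder_mult: "Dder (fmult f g) = fmult (Dder f) g + fmult f (Dder g)"
proof
  fix v :: "nat list"
  define n where "n = length v"
  define H where "H i j = (if 0 < v!j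
      then f (take i (v[j := v!j - 1])) * g (drop i (v[j := v!j - 1])) else 0)" for i j
  have "Dder (fmult f g) v = (\<Sum>j<n. \<Sum>i\<le>n. H i j)"
    unfolding Dder_def fmult_def H_def n_def by (auto intro!: sum.cong)
  also have "\<dots> = (\<Sum>i\<le>n. \<Sum>j<n. H i j)" by (rule sum.swap)
  also have "\<dots> = (\<Sum>i\<le>n. (\<Sum>j<i. H i j) + (\<Sum>j\<in>{i..<n}. H i j))"
  proof (intro sum.cong refl)
    fix i assume "i \<in> {..n}"
    then have "{..<n} = {..<i} \<union> {i..<n}" by auto
    then show "(\<Sum>j<n. H i j) = (\<Sum>j<i. H i j) + (\<Sum>j\<in>{i..<n}. H i j)"
      by (simp add: sum.union_disjoint ivl_disj_int(2))
  qed
  also have "\<dots> = (\<Sum>i\<le>n. Dder f (take i v) * g (drop i v))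
                 + (\<Sum>i\<le>n. f (take i v) * Dder g (drop i v))"
    unfolding sum.distrib[symmetric]
  proof (intro sum.cong refl arg_cong2[where f="(+)"])
    fix i assume i: "i \<in> {..n}"
    show "(\<Sum>j<i. H i j) = Dder f (take i v) * g (drop i v)"
      unfolding Dder_def sum_distrib_right
    proof (intro sum.cong)
      show "{..<i} = {..<length (take i v)}" using i by (simp add: n_def)
    next
      fix j assume "j \<in> {..<length (take i v)}"
      then have "j < i" by simp
      then show "H i j = (if 0 < take i v ! j
          then f ((take i v)[j := take i v ! j - 1]) else 0) * g (drop i v)"
        by (simp add: H_def take_update_swap)
    qed
    have "(\<Sum>j\<in>{i..<n}. H i j) = (\<Sum>j\<in>{0+i..<(n-i)+i}. H i j)" using i by simp
    also have "\<dots> = (\<Sum>j\<in>{0..<n-i}. H i (j+i))" by (rule sum.shift_bounds_nat_ivl)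
    also have "\<dots> = f (take i v) * Dder g (drop i v)"
      unfolding Dder_def sum_distrib_left using i
      by (intro sum.cong) (auto simp: H_def n_def drop_update_swap add.commute atLeast0LessThan)
    finally show "(\<Sum>j\<in>{i..<n}. H i j) = f (take i v) * Dder g (drop i v)" .
  qed
  also have "\<dots> = (fmult (Dder f) g + fmult f (Dder g)) v"
    by (simp add: fmult_def n_def)
  finally show "Dder (fmult f g) v = (fmult (Dder f) g + fmult f (Dder g)) v" .
qed

lemma Dder_nonzero:
  assumes "Dder f v \<noteq> 0"
  shows "\<exists>j<length v. 0 < v!j \<and> f (v[j := v!j - 1]) \<noteq> 0"
proof (rule ccontr)
  assume "\<not> ?thesis"
  then have "Dder f v = 0" unfolding Dder_def by (intro sum.neutral) auto
  with assms show False by simp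
qed

lemma funpow_Dder_Nil: "(Dder ^^ l) f [] = (if l = 0 then f [] else 0)"
  by (cases l) (auto simp: Dder_def)

lemma fin_supp_mono: "fin_supp (mono w)"
  unfolding fin_supp_def mono_def by auto

lemma fin_supp_add: "fin_supp (f::'k::field fa) \<Longrightarrow> fin_supp g \<Longrightarrow> fin_supp (f + g)"
  unfolding fin_supp_def
  by (rule finite_subset[of _ "{w. f w \<noteq> 0} \<union> {w. g w \<noteq> 0}"]) auto

lemma fin_supp_scale: "fin_supp (f::'k::field fa) \<Longrightarrow> fin_supp (fscale c f)"
  unfolding fin_supp_def fscale_def
  by (rule finite_subset[of _ "{w. f w \<noteq> 0}"]) auto

lemma fin_supp_fmult:
  assumes "fin_supp f" "fin_supp g"
  shows "fin_supp (fmult f g)"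
proof -
  have "{w. fmult f g w \<noteq> 0} \<subseteq> (\<lambda>(x,y). x @ y) ` ({w. f w \<noteq> 0} \<times> {w. g w \<noteq> 0})"
  proof
    fix w assume "w \<in> {w. fmult f g w \<noteq> 0}"
    then obtain i where "f (take i w) \<noteq> 0" "g (drop i w) \<noteq> 0" using fmult_nonzero by blast
    then show "w \<in> (\<lambda>(x,y). x @ y) ` ({w. f w \<noteq> 0} \<times> {w. g w \<noteq> 0})"
      by (intro image_eqI[where x="(take i w, drop i w)"]) auto
  qed
  then show ?thesis
    using assms unfolding fin_supp_def by (meson finite_SigmaI finite_imageI finite_subset)
qed

lemma fin_supp_Dder:
  assumes "fin_supp f"
  shows "fin_supp (Dder f)"
proof -
  let ?raised = "(\<lambda>(u,j). u[j := u!j + 1]) ` Sigma {w. f w \<noteq> 0} (\<lambda>u. {..<length u})"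
  have "{v. Dder f v \<noteq> 0} \<subseteq> ?raised"
  proof
    fix v assume "v \<in> {v. Dder f v \<noteq> 0}"
    then obtain j where "j < length v" "0 < v!j" "f (v[j := v!j - 1]) \<noteq> 0"
      using Dder_nonzero by blast
    then show "v \<in> ?raised" by (intro image_eqI[where x="(v[j := v!j - 1], j)"]) auto
  qed
  moreover have "finite (Sigma {w. f w \<noteq> 0} (\<lambda>u. {..<length u}))"
    using assms unfolding fin_supp_def by (intro finite_SigmaI) auto
  ultimately show ?thesis unfolding fin_supp_def by (meson finite_imageI finite_subset)
qed

lemma A1_mult: "f \<in> A1 \<Longrightarrow> g \<in> A1 \<Longrightarrow> fmult f g \<in> A1"
  by (simp add: A1_def fin_supp_fmult)

lemma A1_Dder: "f \<in> A1 \<Longrightarrow> Dder f \<in> A1"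
  by (simp add: A1_def fin_supp_Dder)

lemma mono_A1: "mono w \<in> A1"
  by (simp add: A1_def fin_supp_mono)

lemma A_A1: "f \<in> A \<Longrightarrow> f \<in> A1"
  by (simp add: A_def A1_def)

text \<open>Linearity of a map of coefficient functions; every span argument below is
  an instance of pushing a span through such a map.\<close>
definition flinear :: "('k::field fa \<Rightarrow> 'k fa) \<Rightarrow> bool" where
  "flinear L \<longleftrightarrow> (\<forall>f g. L (f + g) = L f + L g) \<and> (\<forall>c f. L (fscale c f) = fscale c (L f))"

lemma flinear_zero: "flinear L \<Longrightarrow> L 0 = 0"
  by (metis flinear_def fscale_zero_left)

lemma flinear_Dder: "flinear Dder"
  by (simp add: flinear_def Dder_add Dder_scale)

lemma flinear_mult_left: "flinear (fmult a)"
  by (simp add: flinear_def fmult_add_right fmult_scale_right)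

lemma flinear_mult_right: "flinear (\<lambda>f. fmult f b)"
  by (simp add: flinear_def fmult_add_left fmult_scale_left)

lemma flinear_mult_both: "flinear (\<lambda>f. fmult (fmult a f) b)"
  by (simp add: flinear_def fmult_add_left fmult_add_right fmult_scale_left fmult_scale_right)

lemma kspan_zero: "0 \<in> kspan S"
  using kspan.span_zero[of S] by (simp add: fzero_eq)

lemma kspan_add: "f \<in> kspan S \<Longrightarrow> g \<in> kspan S \<Longrightarrow> f + g \<in> kspan S"
  using kspan.span_add[of f S g] by (simp add: fadd_eq)

lemma kspan_sum: "(\<And>x. x \<in> F \<Longrightarrow> h x \<in> kspan S) \<Longrightarrow> sum h F \<in> kspan S"
  by (induction F rule: infinite_finite_induct) (auto simp: kspan_zero kspan_add)

lemma kspan_least: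
  assumes "S \<subseteq> P" "0 \<in> P" "\<And>f g. f \<in> P \<Longrightarrow> g \<in> P \<Longrightarrow> f + g \<in> P"
    "\<And>c f. f \<in> P \<Longrightarrow> fscale c f \<in> P"
  shows "kspan S \<subseteq> P"
proof
  fix f assume "f \<in> kspan S"
  then show "f \<in> P"
  proof induction
    case span_zero show ?case unfolding fzero_eq by (rule assms(2))
  next
    case (span_gen s) then show ?case using assms(1) by blast
  next
    case (span_add f g) then show ?case unfolding fadd_eq using assms(3) by blast
  next
    case (span_scale f c) then show ?case using assms(4) by blast
  qed
qed

lemma kspan_map:
  assumes "flinear L" "f \<in> kspan S" "\<And>s. s \<in> S \<Longrightarrow> L s \<in> kspan T"
  shows "L f \<in> kspan T"
proof -
  have "kspan S \<subseteq> {f. L f \<in> kspan T}"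
  proof (rule kspan_least)
    show "S \<subseteq> {f. L f \<in> kspan T}" using assms(3) by blast
    show "0 \<in> {f. L f \<in> kspan T}" using flinear_zero[OF assms(1)] by (simp add: kspan_zero)
    show "f + g \<in> {f. L f \<in> kspan T}" if "f \<in> {f. L f \<in> kspan T}" "g \<in> {f. L f \<in> kspan T}"
      for f g using that assms(1) by (simp add: flinear_def kspan_add)
    show "fscale c f \<in> {f. L f \<in> kspan T}" if "f \<in> {f. L f \<in> kspan T}" for c f
      using that assms(1) by (simp add: flinear_def kspan.span_scale)
  qed
  with assms(2) show ?thesis by blast
qed

lemma sum_fun_apply: "(sum h F) v = (\<Sum>x\<in>F. h x v)"
  by (induction F rule: infinite_finite_induct) auto

lemma kspan_subset: "S \<subseteq> kspan T \<Longrightarrow> kspan S \<subseteq> kspan T"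
  using kspan_map[of id _ S T] by (auto simp: flinear_def)

lemma fin_supp_in_span:
  assumes "fin_supp f" "\<And>w. f w \<noteq> 0 \<Longrightarrow> P w"
  shows "f \<in> kspan {mono w | w. P w}"
proof -
  have fin: "finite {w. f w \<noteq> 0}" using assms(1) by (simp add: fin_supp_def)
  have "f = (\<Sum>w\<in>{w. f w \<noteq> 0}. fscale (f w) (mono w))"
  proof
    fix v
    have "(\<Sum>w\<in>{w. f w \<noteq> 0}. fscale (f w) (mono w)) v
        = (\<Sum>w\<in>{w. f w \<noteq> 0}. if w = v then f v else 0)"
      unfolding sum_fun_apply by (intro sum.cong) (auto simp: fscale_def mono_def)
    also have "\<dots> = f v" using fin by (simp add: sum.delta)
    finally show "f v = (\<Sum>w\<in>{w. f w \<noteq> 0}. fscale (f w) (mono w)) v" by simp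
  qed
  also have "\<dots> \<in> kspan {mono w | w. P w}"
    using assms(2) by (intro kspan_sum kspan.span_scale kspan.span_gen) auto
  finally show ?thesis .
qed

lemma A1_span_monos: "f \<in> A1 \<Longrightarrow> f \<in> kspan {mono w | w. True}"
  by (rule fin_supp_in_span) (auto simp: A1_def)

section \<open>Homogeneous components A(n)\<close>

definition homog :: "nat \<Rightarrow> 'k::field fa set" where
  "homog n = {f. fin_supp f \<and> (\<forall>w. f w \<noteq> 0 \<longrightarrow> length w = n)}"

lemma Adeg_homog: "Adeg n = homog n"
proof
  show "Adeg n \<subseteq> homog n"
    unfolding Adeg_def
  proof (rule kspan_least)
    show "{mono w | w. length w = n} \<subseteq> homog n"
      using fin_supp_mono by (auto simp: homog_def mono_def split: if_splits)
    show "0 \<in> homog n" by (simp add: homog_def fin_supp_def)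
    show "f + g \<in> homog n" if "f \<in> homog n" "g \<in> homog n" for f g
      using that by (auto simp: homog_def fin_supp_add, metis add.right_neutral)
    show "fscale c f \<in> homog n" if "f \<in> homog n" for c f
      using that fin_supp_scale[of f c] by (auto simp: homog_def fscale_def)
  qed
  show "homog n \<subseteq> Adeg n"
  proof
    fix f assume "f \<in> homog n"
    then show "f \<in> Adeg n"
      unfolding Adeg_def homog_def by (intro fin_supp_in_span) auto
  qed
qed

lemma Adeg_mult:
  assumes "f \<in> Adeg a" "g \<in> Adeg b"
  shows "fmult f g \<in> Adeg (a + b)"
proof -
  have "length w = a + b" if nonzero: "fmult f g w \<noteq> 0" for w
  proof -
    obtain i where "i \<le> length w" "f (take i w) \<noteq> 0" "g (drop i w) \<noteq> 0"
      using fmult_nonzero[OF nonzero] by blast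
    moreover from this have "length (take i w) = a" "length (drop i w) = b"
      using assms by (auto simp: Adeg_homog homog_def)
    ultimately show ?thesis by simp
  qed
  then show ?thesis using assms by (auto simp: Adeg_homog homog_def fin_supp_fmult)
qed

lemma Adeg_Dder:
  assumes "f \<in> Adeg n"
  shows "Dder f \<in> Adeg n"
proof -
  have "length w = n" if "Dder f w \<noteq> 0" for w
    using Dder_nonzero[OF that] assms by (auto simp: Adeg_homog homog_def)
  then show ?thesis using assms by (auto simp: Adeg_homog homog_def fin_supp_Dder)
qed

lemma mono_Adeg: "mono w \<in> Adeg (length w)"
  unfolding Adeg_def by (rule kspan.span_gen) blast

lemma Wset_Dder:
  assumes "y \<in> Wset k n"
  shows "Dder y \<in> Wset k n"
proof -
  obtain l x where "x \<in> W0 k n" "y = (Dder ^^ l) x" using assms by (auto simp: Wset_def Wl_def)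
  then show ?thesis unfolding Wset_def Wl_def by (intro UN_I[of "Suc l"]) auto
qed

lemma W0_Wset: "W0 k n \<subseteq> Wset k n"
  unfolding Wset_def Wl_def by (auto intro: UN_I[of 0])

lemma Wset_A:
  assumes "0 < n"
  shows "(Wset k n :: 'k::field fa set) \<subseteq> A"
proof
  fix y :: "'k fa" assume "y \<in> Wset k n"
  then obtain l w where w: "length w = n" "y = (Dder ^^ l) (mono w)"
    by (auto simp: Wset_def Wl_def W0_def)
  have "fin_supp ((Dder ^^ l) (mono w) :: 'k fa)"
    by (induction l) (auto simp: fin_supp_mono fin_supp_Dder)
  moreover have "(Dder ^^ l) (mono w) [] = (0::'k)"
    using w assms by (auto simp: funpow_Dder_Nil mono_def)
  ultimately show "y \<in> A" using w by (simp add: A_def)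
qed

section \<open>Sandwich spans\<close>

definition sandwich :: "'k::field fa set \<Rightarrow> 'k fa set \<Rightarrow> 'k fa set \<Rightarrow> 'k fa set" where
  "sandwich X G Y = kspan {fmult (fmult x g) y | x g y. x \<in> X \<and> g \<in> G \<and> y \<in> Y}"

lemma sandwich_gen: "x \<in> X \<Longrightarrow> g \<in> G \<Longrightarrow> y \<in> Y \<Longrightarrow> fmult (fmult x g) y \<in> sandwich X G Y"
  unfolding sandwich_def by (rule kspan.span_gen) blast

lemma sandwich_add: "f \<in> sandwich X G Y \<Longrightarrow> g \<in> sandwich X G Y \<Longrightarrow> f + g \<in> sandwich X G Y"
  unfolding sandwich_def by (rule kspan_add)

lemma sandwich_zero: "0 \<in> sandwich X G Y"
  unfolding sandwich_def by (rule kspan_zero)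

lemma sandwich_scale: "f \<in> sandwich X G Y \<Longrightarrow> fscale c f \<in> sandwich X G Y"
  unfolding sandwich_def by (rule kspan.span_scale)

lemma sandwich_map:
  assumes "flinear L" "t \<in> sandwich X G Y"
    "\<And>x g y. x \<in> X \<Longrightarrow> g \<in> G \<Longrightarrow> y \<in> Y \<Longrightarrow> L (fmult (fmult x g) y) \<in> sandwich X' G' Y'"
  shows "L t \<in> sandwich X' G' Y'"
  using assms(1) assms(2)[unfolded sandwich_def] unfolding sandwich_def
proof (rule kspan_map)
  fix s assume "s \<in> {fmult (fmult x g) y | x g y. x \<in> X \<and> g \<in> G \<and> y \<in> Y}"
  then show "L s \<in> kspan {fmult (fmult x g) y | x g y. x \<in> X' \<and> g \<in> G' \<and> y \<in> Y'}"
    using assms(3)[unfolded sandwich_def] by blast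
qed

text \<open>By the Leibniz rule, X * G * Y is D-stable when each of X, G, Y is.\<close>
lemma sandwich_Dder:
  assumes "\<And>x. x \<in> X \<Longrightarrow> Dder x \<in> X" "\<And>g. g \<in> G \<Longrightarrow> Dder g \<in> G"
    "\<And>y. y \<in> Y \<Longrightarrow> Dder y \<in> Y" "t \<in> sandwich X G Y"
  shows "Dder t \<in> sandwich X G Y"
  using flinear_Dder assms(4)
proof (rule sandwich_map)
  fix x g y assume xgy: "x \<in> X" "g \<in> G" "y \<in> Y"
  have "Dder (fmult (fmult x g) y) = fmult (fmult (Dder x) g) y + fmult (fmult x (Dder g)) y
      + fmult (fmult x g) (Dder y)"
    by (simp add: Dder_mult fmult_add_left)
  then show "Dder (fmult (fmult x g) y) \<in> sandwich X G Y"
    using xgy assms(1-3) by (simp add: sandwich_add sandwich_gen)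
qed

lemma sandwich_funpow_Dder:
  assumes "t \<in> sandwich (Adeg n) (Wset k N) A1"
  shows "(Dder ^^ l) t \<in> sandwich (Adeg n) (Wset k N) A1"
proof (induction l)
  case 0
  show ?case using assms by simp
next
  case (Suc l)
  then show ?case by (simp add: sandwich_Dder[OF Adeg_Dder Wset_Dder A1_Dder])
qed

lemma A_zero: "0 \<in> A"
  by (simp add: A_def fin_supp_def)

lemma A_add: "f \<in> A \<Longrightarrow> g \<in> A \<Longrightarrow> f + g \<in> A"
  by (simp add: A_def fin_supp_add)

lemma A_scale: "f \<in> A \<Longrightarrow> fscale c f \<in> A"
  using fin_supp_scale[of f c] by (simp add: A_def fscale_def)

lemma sandwich_ideal:
  fixes G :: "'k::field fa set"
  assumes "G \<subseteq> A"
  shows "is_ideal (sandwich A1 G A1)"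
proof -
  have in_A: "sandwich A1 G A1 \<subseteq> A"
    unfolding sandwich_def
  proof (rule kspan_least)
    show "{fmult (fmult x g) y | x g y. x \<in> A1 \<and> g \<in> G \<and> y \<in> A1} \<subseteq> A"
      using assms by (auto simp: A_def A1_def fmult_Nil intro!: fin_supp_fmult)
  qed (auto intro: A_zero A_add A_scale)
  have left: "fmult c t \<in> sandwich A1 G A1" if "c \<in> A" "t \<in> sandwich A1 G A1" for c t
    using flinear_mult_left that(2)
  proof (rule sandwich_map)
    fix x g y :: "'k fa" assume "x \<in> A1" "g \<in> G" "y \<in> A1"
    then show "fmult c (fmult (fmult x g) y) \<in> sandwich A1 G A1"
      using that(1) by (simp add: fmult_assoc[symmetric] sandwich_gen A1_mult A_A1)
  qed
  have right: "fmult t c \<in> sandwich A1 G A1" if "c \<in> A" "t \<in> sandwich A1 G A1" for c t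
    using flinear_mult_right that(2)
  proof (rule sandwich_map)
    fix x g y :: "'k fa" assume "x \<in> A1" "g \<in> G" "y \<in> A1"
    then have "fmult (fmult x g) (fmult y c) \<in> sandwich A1 G A1"
      using that(1) by (simp add: sandwich_gen A1_mult A_A1)
    then show "fmult (fmult (fmult x g) y) c \<in> sandwich A1 G A1"
      by (simp add: fmult_assoc)
  qed
  show ?thesis
    unfolding is_ideal_def fzero_eq fadd_eq
  proof (intro conjI ballI allI)
    show "sandwich A1 G A1 \<subseteq> A" by (rule in_A)
    show "0 \<in> sandwich A1 G A1" by (rule sandwich_zero)
    show "f + g \<in> sandwich A1 G A1" if "f \<in> sandwich A1 G A1" "g \<in> sandwich A1 G A1" for f g
      using that by (rule sandwich_add)
    show "fscale c f \<in> sandwich A1 G A1" if "f \<in> sandwich A1 G A1" for c f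
      using that by (rule sandwich_scale)
    show "fmult c f \<in> sandwich A1 G A1" "fmult f c \<in> sandwich A1 G A1"
      if "c \<in> A" "f \<in> sandwich A1 G A1" for c f
      using that by (rule left, rule right)
  qed
qed

text \<open>Since A1 has a unity, A1 * G * A1 contains G.\<close>
lemma sandwich_contains: "G \<subseteq> sandwich A1 G A1"
proof
  fix g assume "g \<in> G"
  then have "fmult (fmult (mono []) g) (mono []) \<in> sandwich A1 G A1"
    by (intro sandwich_gen mono_A1)
  then show "g \<in> sandwich A1 G A1" by (simp add: mono_Nil_left mono_Nil_right)
qed

lemma ideal_gen_sandwich:
  assumes "G \<subseteq> A"
  shows "ideal_gen G \<subseteq> sandwich A1 G A1"
  unfolding ideal_gen_def using sandwich_ideal[OF assms] sandwich_contains by blast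

lemma sandwich_absorb:
  fixes a :: "'k::field fa"
  assumes "a \<in> Adeg d" "b \<in> A1" "t \<in> sandwich (Adeg n) G A1"
  shows "fmult (fmult a t) b \<in> sandwich (Adeg (d + n)) G A1"
  using flinear_mult_both assms(3)
proof (rule sandwich_map)
  fix x g y :: "'k fa" assume "x \<in> Adeg n" "g \<in> G" "y \<in> A1"
  then have "fmult (fmult (fmult a x) g) (fmult y b) \<in> sandwich (Adeg (d + n)) G A1"
    using assms(1,2) by (intro sandwich_gen Adeg_mult A1_mult)
  then show "fmult (fmult a (fmult (fmult x g) y)) b \<in> sandwich (Adeg (d + n)) G A1"
    by (simp add: fmult_assoc)
qed

section \<open>Cutting words into blocks of length N\<close>

definition Wspan :: "nat \<Rightarrow> nat \<Rightarrow> 'k::field fa set" where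
  "Wspan k N = kspan {fmult (fmult u w) v | u w v m.
      u \<in> Adeg (m * N) \<and> w \<in> Wset k N \<and> v \<in> A1}"

lemma sandwich_Wspan: "sandwich (Adeg (m * N)) (Wset k N) A1 \<subseteq> Wspan k N"
  unfolding sandwich_def Wspan_def by (rule kspan_subset) (blast intro: kspan.span_gen)

lemma block_factorisation:
  assumes "0 < N" "length w = 2 * N" "\<forall>i\<in>set w. i < k"
  obtains m n where "d + n = m * N" "(mono w :: 'k::field fa) \<in> sandwich (Adeg n) (Wset k N) A1"
proof -
  define s where "s = d mod N"
  have "s < N" using assms(1) by (simp add: s_def)
  define p where "p = take (N - s) w"
  define q where "q = take N (drop (N - s) w)"
  define r where "r = drop N (drop (N - s) w)"
  have pqr: "w = p @ q @ r" unfolding p_def q_def r_def by (simp only: append_take_drop_id)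
  have "length p = N - s" "length q = N"
    using assms(2) \<open>s < N\<close> by (simp_all add: p_def q_def)
  moreover have "set q \<subseteq> set w" using pqr by (metis Un_iff set_append subsetI)
  then have "mono q \<in> W0 k N"
    unfolding W0_def using \<open>length q = N\<close> assms(3) by blast
  ultimately have "fmult (fmult (mono p) (mono q)) (mono r)
      \<in> (sandwich (Adeg (N - s)) (Wset k N) A1 :: 'k fa set)"
    using mono_Adeg[of p] W0_Wset by (intro sandwich_gen mono_A1) auto
  then have "(mono w :: 'k fa) \<in> sandwich (Adeg (N - s)) (Wset k N) A1"
    by (simp add: pqr mono_mult)
  moreover have "d + (N - s) = (d div N + 1) * N"
  proof -
    have "d = d div N * N + s" by (simp add: s_def)
    then show ?thesis using \<open>s < N\<close> by simp
  qed
  ultimately show thesis by (rule that[rotated])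
qed

lemma generator_in_Wspan:
  fixes a :: "'k::field fa"
  assumes "0 < N" "a \<in> A1" "g \<in> Wset k (2 * N)" "b \<in> A1"
  shows "fmult (fmult a g) b \<in> Wspan k N"
proof -
  obtain l w where w: "length w = 2 * N" "\<forall>i\<in>set w. i < k" "g = (Dder ^^ l) (mono w)"
    using assms(3) by (auto simp: Wset_def Wl_def W0_def)
  have monomial_case: "fmult (fmult (mono u) g) b \<in> Wspan k N" for u
  proof -
    obtain m n where mn: "length u + n = m * N"
      "(mono w :: 'k fa) \<in> sandwich (Adeg n) (Wset k N) A1"
      using block_factorisation[OF assms(1) w(1,2)] by blast
    have "(Dder ^^ l) (mono w :: 'k fa) \<in> sandwich (Adeg n) (Wset k N) A1"
      using mn(2) by (rule sandwich_funpow_Dder)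
    then have "fmult (fmult (mono u) g) b \<in> sandwich (Adeg (m * N)) (Wset k N) A1"
      using sandwich_absorb[OF mono_Adeg assms(4)] mn(1) w(3) by metis
    then show ?thesis using sandwich_Wspan by blast
  qed
  have "fmult a (fmult g b) \<in> Wspan k N"
    using flinear_mult_right A1_span_monos[OF assms(2)] unfolding Wspan_def
    by (rule kspan_map) (use monomial_case in \<open>auto simp: fmult_assoc Wspan_def\<close>)
  then show ?thesis by (simp add: fmult_assoc)
qed

theorem ideal_gen_in_Wspan:
  assumes "0 < N"
  shows "ideal_gen (Wset k (2 * N)) \<subseteq> (Wspan k N :: 'k::field fa set)"
proof -
  have "ideal_gen (Wset k (2 * N)) \<subseteq> (sandwich A1 (Wset k (2 * N)) A1 :: 'k fa set)"
    using assms by (intro ideal_gen_sandwich Wset_A) simp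
  also have "\<dots> \<subseteq> Wspan k N"
    unfolding sandwich_def Wspan_def
    using generator_in_Wspan[OF assms] by (intro kspan_subset) (auto simp: Wspan_def)
  finally show ?thesis .
qed

text \<open>The statement of the paper: the case N = 100^(k^2).\<close>
theorem mainTheorem2:
  fixes k :: nat
  assumes "1 \<le> k"
  shows "(Ik k :: 'k::field fa set) \<subseteq> Wk k"
proof -
  have "Wk k = (Wspan k (100 ^ (k\<^sup>2)) :: 'k fa set)"
    by (simp add: Wk_def Wspan_def)
  then show ?thesis
    unfolding Ik_def using ideal_gen_in_Wspan[of "100 ^ (k\<^sup>2)" k] by simp
qed

end
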